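(* Let $\alpha$ be a sentence, $\psi$ and $\beta$ formulas, and $\Gamma$ a set of formulas. If $\Gamma,\beta\vdash\psi$, then $\Gamma,\alpha\vee\beta\vdash\alpha\vee\psi$.
   Context: Fix a countable predicate language $\mathcal L$ consisting of variables, constant symbols and predicate symbols (so terms are just variables and constants), with connectives $\to$, $\&$, the propositional constant $0$ and quantifiers $\forall,\exists$. Abbreviations: $\phi\wedge\psi$ is $\phi\&(\phi\to\psi)$; $\phi\vee\psi$ is $((\phi\to\psi)\to\psi)\wedge((\psi\to\phi)\to\phi)$; $\neg\phi$ is $\phi\to 0$; $1$ is $0\to 0$; $\beta^n$ is $\beta\&\cdots\&\beta$ ($n$ factors). $\phi(x/t)$ denotes the result of substituting the term $t$ for the free occurrences of $x$ in $\phi$. A sentence is a formula with no free variables; a theory is any set of formulas. Hájek's basic predicate logic BL$\forall$ has the axiom schemata (A1) $(\phi\to\psi)\to((\psi\to\chi)\to(\phi\to\chi))$; (A2) $(\phi\&\psi)\to\phi$; (A3) $(\phi\&\psi)\to(\psi\&\phi)$; (A4) $(\phi\&(\phi\to\psi))\to(\psi\&(\psi\to\phi))$; (A5) $(\phi\to(\psi\to\chi))\to((\phi\&\psi)\to\chi)$; (A6) $((\phi\&\psi)\to\chi)\to(\phi\to(\psi\to\chi))$; (A7) $((\phi\to\psi)\to\chi)\to(((\psi\to\phi)\to\chi)\to\chi)$; (A8) $0\to\phi$; ($\forall$1) $\forall x\phi\to\phi(x/t)$ and ($\exists$1) $\phi(x/t)\to\exists x\phi$, for $t$ substitutable for $x$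 in $\phi$; ($\forall$2) $\forall x(\phi\to\psi)\to(\phi\to\forall x\psi)$, ($\exists$2) $\forall x(\psi\to\phi)\to(\exists x\psi\to\phi)$ and (Lin) $\forall x(\psi\vee\phi)\to((\forall x\psi)\vee\phi)$, each with $x$ not free in $\phi$; its rules are modus ponens (from $\phi$ and $\phi\to\psi$ infer $\psi$) and generalization (from $\phi$ infer $\forall x\phi$). The logic $\vdash$ extends BL$\forall$ by the axiom schema (RC) $\forall x(\chi\&\chi)\to((\forall x\chi)\&(\forall x\chi))$ for every formula $\chi$, and the infinitary rule (Inf): from all of $\phi\vee(\alpha\to\beta^n)$, $n\in\mathbb N$, infer $\phi\vee(\alpha\to(\alpha\&\beta))$, where $\phi,\alpha,\beta$ are sentences. A proof from $\Gamma$ is a sequence $(\phi_i)_{i\le\xi}$ indexed by the ordinals up to some ordinal $\xi$ such that each $\phi_i$ is an axiom of BL$\forall$, an instance of (RC), a member of $\Gamma$, or is obtained from formulas in $\{\phi_j: j<i\}$ by modus ponens, generalization, or (Inf). $\Gamma\vdash\phi$ means there is a proof from $\Gamma$ whose last member is $\phi$; $\Gamma,\psi\vdash\phi$ means $\Gamma\cup\{\psi\}\vdash\phi$. *)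

theory Defs
  imports Main
begin

datatype tm = Var nat | Const nat

datatype fm =
    Pred nat "tm list"
  | Imp fm fm
  | SConj fm fm
  | Zero
  | All nat fm
  | Ex nat fm

fun fv_tm :: "tm \<Rightarrow> nat set" where
  "fv_tm (Var x) = {x}"
| "fv_tm (Const c) = {}"

fun fv :: "fm \<Rightarrow> nat set" where
  "fv (Pred p ts) = (\<Union>t\<in>set ts. fv_tm t)"
| "fv (Imp a b) = fv a \<union> fv b"
| "fv (SConj a b) = fv a \<union> fv b"
| "fv Zero = {}"
| "fv (All x a) = fv a - {x}"
| "fv (Ex x a) = fv a - {x}"

definition sentence :: "fm \<Rightarrow> bool" where
  "sentence \<phi> \<longleftrightarrow> fv \<phi> = {}"

fun subst_tm :: "nat \<Rightarrow> tm \<Rightarrow> tm \<Rightarrow> tm" where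
  "subst_tm x t (Var y) = (if y = x then t else Var y)"
| "subst_tm x t (Const c) = Const c"

fun subst :: "nat \<Rightarrow> tm \<Rightarrow> fm \<Rightarrow> fm" where
  "subst x t (Pred p ts) = Pred p (map (subst_tm x t) ts)"
| "subst x t (Imp a b) = Imp (subst x t a) (subst x t b)"
| "subst x t (SConj a b) = SConj (subst x t a) (subst x t b)"
| "subst x t Zero = Zero"
| "subst x t (All y a) = (if y = x then All y a else All y (subst x t a))"
| "subst x t (Ex y a) = (if y = x then Ex y a else Ex y (subst x t a))"

fun substitutable :: "tm \<Rightarrow> nat \<Rightarrow> fm \<Rightarrow> bool" where
  "substitutable t x (Pred p ts) = True"
| "substitutable t x (Imp a b) = (substitutable t x a \<and> substitutable t x b)"
| "substitutable t x (SConj a b) = (substitutable t x a \<and> substitutable t x b)"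
| "substitutable t x Zero = True"
| "substitutable t x (All y a) =
     (x \<notin> fv (All y a) \<or> (y \<notin> fv_tm t \<and> substitutable t x a))"
| "substitutable t x (Ex y a) =
     (x \<notin> fv (Ex y a) \<or> (y \<notin> fv_tm t \<and> substitutable t x a))"

definition Wedge :: "fm \<Rightarrow> fm \<Rightarrow> fm" where
  "Wedge a b = SConj a (Imp a b)"

definition Vee :: "fm \<Rightarrow> fm \<Rightarrow> fm" where
  "Vee a b = Wedge (Imp (Imp a b) b) (Imp (Imp b a) a)"

definition Neg :: "fm \<Rightarrow> fm" where
  "Neg a = Imp a Zero"

definition One :: fm where
  "One = Imp Zero Zero"

text \<open>spow b n = b^(n+1) = b & b & ... & b  (n+1 factors).\<close>
fun spow :: "fm \<Rightarrow> nat \<Rightarrow> fm" where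
  "spow b 0 = b"
| "spow b (Suc n) = SConj b (spow b n)"

inductive bl_axiom :: "fm \<Rightarrow> bool" where
  A1: "bl_axiom (Imp (Imp \<phi> \<psi>) (Imp (Imp \<psi> \<chi>) (Imp \<phi> \<chi>)))"
| A2: "bl_axiom (Imp (SConj \<phi> \<psi>) \<phi>)"
| A3: "bl_axiom (Imp (SConj \<phi> \<psi>) (SConj \<psi> \<phi>))"
| A4: "bl_axiom (Imp (SConj \<phi> (Imp \<phi> \<psi>)) (SConj \<psi> (Imp \<psi> \<phi>)))"
| A5: "bl_axiom (Imp (Imp \<phi> (Imp \<psi> \<chi>)) (Imp (SConj \<phi> \<psi>) \<chi>))"
| A6: "bl_axiom (Imp (Imp (SConj \<phi> \<psi>) \<chi>) (Imp \<phi> (Imp \<psi> \<chi>)))"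
| A7: "bl_axiom (Imp (Imp (Imp \<phi> \<psi>) \<chi>) (Imp (Imp (Imp \<psi> \<phi>) \<chi>) \<chi>))"
| A8: "bl_axiom (Imp Zero \<phi>)"
| All1: "substitutable t x \<phi> \<Longrightarrow> bl_axiom (Imp (All x \<phi>) (subst x t \<phi>))"
| Ex1: "substitutable t x \<phi> \<Longrightarrow> bl_axiom (Imp (subst x t \<phi>) (Ex x \<phi>))"
| All2: "x \<notin> fv \<phi> \<Longrightarrow> bl_axiom (Imp (All x (Imp \<phi> \<psi>)) (Imp \<phi> (All x \<psi>)))"
| Ex2: "x \<notin> fv \<phi> \<Longrightarrow> bl_axiom (Imp (All x (Imp \<psi> \<phi>)) (Imp (Ex x \<psi>) \<phi>))"
| Lin: "x \<notin> fv \<phi> \<Longrightarrow> bl_axiom (Imp (All x (Vee \<psi> \<phi>)) (Vee (All x \<psi>) \<phi>))"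

definition rc_axiom :: "fm \<Rightarrow> bool" where
  "rc_axiom \<theta> \<longleftrightarrow> (\<exists>x \<chi>. \<theta> = Imp (All x (SConj \<chi> \<chi>)) (SConj (All x \<chi>) (All x \<chi>)))"

inductive derives :: "fm set \<Rightarrow> fm \<Rightarrow> bool" (infix "\<turnstile>" 55) for \<Gamma> :: "fm set" where
  ax: "bl_axiom \<phi> \<Longrightarrow> \<Gamma> \<turnstile> \<phi>"
| rc: "rc_axiom \<phi> \<Longrightarrow> \<Gamma> \<turnstile> \<phi>"
| hyp: "\<phi> \<in> \<Gamma> \<Longrightarrow> \<Gamma> \<turnstile> \<phi>"
| mp: "\<Gamma> \<turnstile> \<phi> \<Longrightarrow> \<Gamma> \<turnstile> Imp \<phi> \<psi> \<Longrightarrow> \<Gamma> \<turnstile> \<psi>"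
| gen: "\<Gamma> \<turnstile> \<phi> \<Longrightarrow> \<Gamma> \<turnstile> All x \<phi>"
| inf: "sentence \<phi> \<Longrightarrow> sentence \<alpha> \<Longrightarrow> sentence \<beta> \<Longrightarrow>
        (\<forall>n. \<Gamma> \<turnstile> Vee \<phi> (Imp \<alpha> (spow \<beta> n))) \<Longrightarrow>
        \<Gamma> \<turnstile> Vee \<phi> (Imp \<alpha> (SConj \<alpha> \<beta>))"

end

theory Submission
  imports Defs
begin

text \<open>Every rule of the calculus remains sound when its premises and conclusion are all
  disjoined with a fixed sentence \<open>\<alpha>\<close>: modus ponens because \<open>\<alpha> \<or> _\<close> distributes over
  implication, generalization by (Lin) since \<open>x\<close> is not free in \<open>\<alpha>\<close>, and (Inf) by
  associativity of \<open>\<or>\<close>, as its premises and conclusion are themselves disjunctions.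
  Induction on the derivation of \<open>\<psi>\<close> from \<open>\<Gamma>, \<beta>\<close> then gives \<open>\<alpha> \<or> \<psi>\<close> from \<open>\<Gamma>, \<alpha> \<or> \<beta>\<close>.\<close>

lemma derives_imp_trans: "\<Gamma> \<turnstile> Imp a b \<Longrightarrow> \<Gamma> \<turnstile> Imp b c \<Longrightarrow> \<Gamma> \<turnstile> Imp a c"
  by (meson ax bl_axiom.A1 mp)

lemma derives_uncurry: "\<Gamma> \<turnstile> Imp a (Imp b c) \<Longrightarrow> \<Gamma> \<turnstile> Imp (SConj a b) c"
  by (meson ax bl_axiom.A5 mp)

lemma derives_curry: "\<Gamma> \<turnstile> Imp (SConj a b) c \<Longrightarrow> \<Gamma> \<turnstile> Imp a (Imp b c)"
  by (meson ax bl_axiom.A6 mp)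

lemma derives_imp_K: "\<Gamma> \<turnstile> Imp a (Imp b a)"
  by (rule derives_curry, rule ax, rule bl_axiom.A2)

lemma derives_One_imp: "\<Gamma> \<turnstile> Imp (Imp One a) a"
proof -
  have "\<Gamma> \<turnstile> Imp (SConj One (Imp One a)) a"
    by (rule derives_imp_trans[OF ax[OF bl_axiom.A4] ax[OF bl_axiom.A2]])
  moreover have "\<Gamma> \<turnstile> One"
    unfolding One_def by (rule ax, rule bl_axiom.A8)
  ultimately show ?thesis
    using derives_curry mp by blast
qed

lemma derives_imp_refl: "\<Gamma> \<turnstile> Imp a a"
  using derives_imp_trans[OF derives_imp_K derives_One_imp] .

lemma derives_imp_swap: "\<Gamma> \<turnstile> Imp a (Imp b c) \<Longrightarrow> \<Gamma> \<turnstile> Imp b (Imp a c)"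
  by (meson derives_uncurry derives_curry derives_imp_trans ax bl_axiom.A3)

lemma derives_imp_eval: "\<Gamma> \<turnstile> Imp a (Imp (Imp a b) b)"
  by (rule derives_imp_swap, rule derives_imp_refl)

lemma derives_imp_prefix: "\<Gamma> \<turnstile> Imp x y \<Longrightarrow> \<Gamma> \<turnstile> Imp (Imp b x) (Imp b y)"
  by (meson ax bl_axiom.A1 mp derives_imp_swap)

lemma derives_imp_suffix: "\<Gamma> \<turnstile> Imp x y \<Longrightarrow> \<Gamma> \<turnstile> Imp (Imp y c) (Imp x c)"
  by (meson ax bl_axiom.A1 mp)

lemma derives_SConj_mono_left: "\<Gamma> \<turnstile> Imp x y \<Longrightarrow> \<Gamma> \<turnstile> Imp (SConj x z) (SConj y z)"
  by (meson derives_uncurry derives_imp_trans derives_curry derives_imp_refl)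

lemma derives_prelinearity:
  "\<Gamma> \<turnstile> Imp (Imp a b) c \<Longrightarrow> \<Gamma> \<turnstile> Imp (Imp b a) c \<Longrightarrow> \<Gamma> \<turnstile> c"
  by (meson ax bl_axiom.A7 mp)

lemma derives_Wedge_left: "\<Gamma> \<turnstile> Imp (Wedge a b) a"
  unfolding Wedge_def by (rule ax, rule bl_axiom.A2)

lemma derives_Wedge_right: "\<Gamma> \<turnstile> Imp (Wedge a b) b"
  unfolding Wedge_def by (rule derives_uncurry, rule derives_imp_eval)

lemma derives_Wedge_intro:
  assumes "\<Gamma> \<turnstile> Imp c a" and "\<Gamma> \<turnstile> Imp c b"
  shows "\<Gamma> \<turnstile> Imp c (Wedge a b)"
proof (rule derives_prelinearity)
  show "\<Gamma> \<turnstile> Imp (Imp a b) (Imp c (Wedge a b))"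
    unfolding Wedge_def
    by (rule derives_imp_swap, rule derives_curry, rule derives_SConj_mono_left, rule assms(1))
  have "\<Gamma> \<turnstile> Imp (SConj c (Imp b a)) (SConj a (Imp a b))"
    by (rule derives_imp_trans[OF derives_SConj_mono_left[OF assms(2)] ax[OF bl_axiom.A4]])
  then show "\<Gamma> \<turnstile> Imp (Imp b a) (Imp c (Wedge a b))"
    unfolding Wedge_def by (rule derives_imp_swap[OF derives_curry])
qed

lemma derives_Vee_intro1: "\<Gamma> \<turnstile> Imp a (Vee a b)"
  unfolding Vee_def by (rule derives_Wedge_intro[OF derives_imp_eval derives_imp_K])

lemma derives_Vee_intro2: "\<Gamma> \<turnstile> Imp b (Vee a b)"
  unfolding Vee_def by (rule derives_Wedge_intro[OF derives_imp_K derives_imp_eval])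

lemma derives_Vee_elim:
  assumes "\<Gamma> \<turnstile> Imp a c" and "\<Gamma> \<turnstile> Imp b c"
  shows "\<Gamma> \<turnstile> Imp (Vee a b) c"
proof (rule derives_prelinearity)
  show "\<Gamma> \<turnstile> Imp (Imp a b) (Imp (Vee a b) c)"
    unfolding Vee_def
    using derives_imp_trans[OF derives_imp_eval derives_imp_prefix[OF assms(2)]]
    by (rule derives_imp_trans[OF _ derives_imp_suffix[OF derives_Wedge_left]])
  show "\<Gamma> \<turnstile> Imp (Imp b a) (Imp (Vee a b) c)"
    unfolding Vee_def
    using derives_imp_trans[OF derives_imp_eval derives_imp_prefix[OF assms(1)]]
    by (rule derives_imp_trans[OF _ derives_imp_suffix[OF derives_Wedge_right]])
qed

lemma derives_Vee_comm: "\<Gamma> \<turnstile> Imp (Vee a b) (Vee b a)"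
  by (rule derives_Vee_elim[OF derives_Vee_intro2 derives_Vee_intro1])

lemma derives_Vee_assoc: "\<Gamma> \<turnstile> Imp (Vee a (Vee b c)) (Vee (Vee a b) c)"
  by (rule derives_Vee_elim[OF derives_imp_trans[OF derives_Vee_intro1 derives_Vee_intro1]
        derives_Vee_elim[OF derives_imp_trans[OF derives_Vee_intro2 derives_Vee_intro1]
          derives_Vee_intro2]])

lemma derives_Vee_assoc': "\<Gamma> \<turnstile> Imp (Vee (Vee a b) c) (Vee a (Vee b c))"
  by (rule derives_Vee_elim[OF derives_Vee_elim[OF derives_Vee_intro1
          derives_imp_trans[OF derives_Vee_intro1 derives_Vee_intro2]]
        derives_imp_trans[OF derives_Vee_intro2 derives_Vee_intro2]])

lemma derives_Vee_mp_imp: "\<Gamma> \<turnstile> Imp (Vee a b) (Imp (Vee a (Imp b c)) (Vee a c))"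
proof (rule derives_Vee_elim)
  show "\<Gamma> \<turnstile> Imp a (Imp (Vee a (Imp b c)) (Vee a c))"
    by (rule derives_imp_trans[OF derives_Vee_intro1 derives_imp_K])
  show "\<Gamma> \<turnstile> Imp b (Imp (Vee a (Imp b c)) (Vee a c))"
    by (rule derives_imp_swap,
        rule derives_Vee_elim[OF derives_imp_trans[OF derives_Vee_intro1 derives_imp_K]
          derives_imp_prefix[OF derives_Vee_intro2]])
qed

lemma sentence_Vee: "sentence (Vee a b) \<longleftrightarrow> sentence a \<and> sentence b"
  by (auto simp: sentence_def Vee_def Wedge_def)

lemma derives_Vee_right: "\<Gamma> \<turnstile> \<phi> \<Longrightarrow> \<Gamma> \<turnstile> Vee \<alpha> \<phi>"
  using derives_Vee_intro2 mp by blast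

lemma derives_Vee_mp: "\<Gamma> \<turnstile> Vee \<alpha> \<phi> \<Longrightarrow> \<Gamma> \<turnstile> Vee \<alpha> (Imp \<phi> \<psi>) \<Longrightarrow> \<Gamma> \<turnstile> Vee \<alpha> \<psi>"
  using derives_Vee_mp_imp mp by blast

lemma derives_Vee_gen:
  assumes "x \<notin> fv \<alpha>" and "\<Gamma> \<turnstile> Vee \<alpha> \<phi>"
  shows "\<Gamma> \<turnstile> Vee \<alpha> (All x \<phi>)"
proof -
  have "\<Gamma> \<turnstile> All x (Vee \<phi> \<alpha>)"
    using assms(2) derives_Vee_comm mp gen by blast
  then have "\<Gamma> \<turnstile> Vee (All x \<phi>) \<alpha>"
    using ax[OF bl_axiom.Lin[OF assms(1)]] mp by blast
  then show ?thesis
    using derives_Vee_comm mp by blast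
qed

lemma derives_Vee_inf:
  assumes "sentence \<alpha>" and "sentence \<phi>" and "sentence a" and "sentence b"
    and "\<forall>n. \<Gamma> \<turnstile> Vee \<alpha> (Vee \<phi> (Imp a (spow b n)))"
  shows "\<Gamma> \<turnstile> Vee \<alpha> (Vee \<phi> (Imp a (SConj a b)))"
proof -
  have "\<forall>n. \<Gamma> \<turnstile> Vee (Vee \<alpha> \<phi>) (Imp a (spow b n))"
    using assms(5) derives_Vee_assoc mp by blast
  then have "\<Gamma> \<turnstile> Vee (Vee \<alpha> \<phi>) (Imp a (SConj a b))"
    using inf assms(1-4) sentence_Vee by blast
  then show ?thesis
    using derives_Vee_assoc' mp by blast
qed

lemma derives_Vee_transfer:
  assumes "sentence \<alpha>" and "\<Delta> \<turnstile> \<psi>" and "\<And>\<phi>. \<phi> \<in> \<Delta> \<Longrightarrow> \<Gamma> \<turnstile> Vee \<alpha> \<phi>"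
  shows "\<Gamma> \<turnstile> Vee \<alpha> \<psi>"
  using assms(2)
proof (induction rule: derives.induct)
  case (ax \<phi>)
  then show ?case by (intro derives_Vee_right derives.ax)
next
  case (rc \<phi>)
  then show ?case by (intro derives_Vee_right derives.rc)
next
  case (hyp \<phi>)
  then show ?case by (rule assms(3))
next
  case (mp \<phi> \<psi>)
  then show ?case using derives_Vee_mp by blast
next
  case (gen \<phi> x)
  moreover have "x \<notin> fv \<alpha>"
    using assms(1) by (simp add: sentence_def)
  ultimately show ?case by (intro derives_Vee_gen)
next
  case (inf \<phi> a b)
  then show ?case using assms(1) by (intro derives_Vee_inf) auto
qed

theorem mainTheorem2:
  assumes "sentence \<alpha>"
    and "insert \<beta> \<Gamma> \<turnstile> \<psi>"
  shows "insert (Vee \<alpha> \<beta>) \<Gamma> \<turnstile> Vee \<alpha> \<psi>"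
  using assms
proof (rule derives_Vee_transfer)
  fix \<phi>
  assume "\<phi> \<in> insert \<beta> \<Gamma>"
  then show "insert (Vee \<alpha> \<beta>) \<Gamma> \<turnstile> Vee \<alpha> \<phi>"
    by (auto intro: hyp derives_Vee_right)
qed

end
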